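(* Let $0<q<1$ and $m,n\in\mathbb N_0$. Then the Rodrigues-type formula $$H_{m,n}(z_1,z_2|q)=\frac{(1-1/q)^{m+n}q^{mn}}{(qz_1z_2;q)_\infty}\,D_{q^{-1},z_2}^m D_{q^{-1},z_1}^n\big((qz_1z_2;q)_\infty\big)$$ holds, and consequently the raising relations $$H_{m+1,n}(z_1,z_2|q)=q^n\frac{1-1/q}{(qz_1z_2;q)_\infty}D_{q^{-1},z_2}\Big((qz_1z_2;q)_\infty H_{m,n}(z_1,z_2|q)\Big),$$ $$H_{m,n+1}(z_1,z_2|q)=q^m\frac{1-1/q}{(qz_1z_2;q)_\infty}D_{q^{-1},z_1}\Big((qz_1z_2;q)_\infty H_{m,n}(z_1,z_2|q)\Big)$$ hold.
   Context: Let $0<q<1$. $(a;q)_n=\prod_{j=0}^{n-1}(1-aq^j)$, $(a;q)_\infty=\prod_{j\ge0}(1-aq^j)$, $\left[{m\atop k}\right]_q=\frac{(q;q)_m}{(q;q)_k(q;q)_{m-k}}$, $m\wedge n=\min\{m,n\}$. For $p\in\{q,q^{-1}\}$ the operator $D_{p,z}$ acts on functions of $z$ by $(D_{p,z}f)(z)=\frac{f(z)-f(pz)}{(1-p)z}$. The first $q$-$2D$-Hermite polynomials are $$H_{m,n}(z_1,z_2|q)=\sum_{k=0}^{m\wedge n}\left[{m\atop k}\right]_q\left[{n\atop k}\right]_q(-1)^kq^{\binom k2}(q;q)_k\,z_1^{m-k}z_2^{n-k}.$$ *)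

theory Defs
  imports "HOL-Analysis.Analysis"
begin

definition qpoch :: "complex \<Rightarrow> complex \<Rightarrow> nat \<Rightarrow> complex" where
  "qpoch a q n = (\<Prod>j<n. 1 - a * q ^ j)"

definition qpoch_inf :: "complex \<Rightarrow> complex \<Rightarrow> complex" where
  "qpoch_inf a q = (\<Prod>j. 1 - a * q ^ j)"

definition qbinom :: "complex \<Rightarrow> nat \<Rightarrow> nat \<Rightarrow> complex" where
  "qbinom q m k = qpoch q q m / (qpoch q q k * qpoch q q (m - k))"

definition H2 :: "nat \<Rightarrow> nat \<Rightarrow> complex \<Rightarrow> complex \<Rightarrow> complex \<Rightarrow> complex" where
  "H2 m n z1 z2 q = (\<Sum>k\<le>min m n. qbinom q m k * qbinom q n k * (-1) ^ k
       * q ^ (k choose 2) * qpoch q q k * z1 ^ (m - k) * z2 ^ (n - k))"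

definition D1 :: "complex \<Rightarrow> (complex \<Rightarrow> complex \<Rightarrow> complex) \<Rightarrow> complex \<Rightarrow> complex \<Rightarrow> complex" where
  "D1 p F = (\<lambda>z1 z2. (F z1 z2 - F (p * z1) z2) / ((1 - p) * z1))"

definition D2 :: "complex \<Rightarrow> (complex \<Rightarrow> complex \<Rightarrow> complex) \<Rightarrow> complex \<Rightarrow> complex \<Rightarrow> complex" where
  "D2 p F = (\<lambda>z1 z2. (F z1 z2 - F z1 (p * z2)) / ((1 - p) * z2))"

end

theory Submission
  imports Defs
begin

text \<open>The weight \<open>W(z1, z2) = (q z1 z2; q)\<^sub>\<infinity>\<close> satisfies \<open>W(z1/q, z2) = (1 - z1 z2) W(z1, z2)\<close>,
  so \<open>D\<^bsub>1/q,z1\<^esub>(W f) = W (f(z1) - (1 - z1 z2) f(z1/q)) / ((1 - 1/q) z1)\<close>. For \<open>f = H\<^sub>m\<^sub>,\<^sub>n\<close>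
  the numerator equals \<open>q\<^sup>-\<^sup>m z1 H\<^sub>m\<^sub>,\<^sub>n\<^sub>+\<^sub>1\<close>, a q-difference relation that follows by comparing
  coefficients with the help of the q-Pascal rule. This is the raising relation in \<open>n\<close>; the one
  in \<open>m\<close> follows from the symmetry \<open>H\<^sub>m\<^sub>,\<^sub>n(z1, z2) = H\<^sub>n\<^sub>,\<^sub>m(z2, z1)\<close>, and iterating both
  from \<open>H\<^sub>0\<^sub>,\<^sub>0 = 1\<close> yields the Rodrigues formula.\<close>

lemma qpoch_0 [simp]: "qpoch a q 0 = 1"
  by (simp add: qpoch_def)

lemma qpoch_Suc: "qpoch a q (Suc n) = qpoch a q n * (1 - a * q ^ n)"
  by (simp add: qpoch_def)

lemma qpoch_nonzero:
  fixes q :: complex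
  assumes "norm q < 1"
  shows "qpoch q q n \<noteq> 0"
proof -
  have "norm (q * q ^ j) < 1" for j
    using power_strict_mono[OF assms, of "Suc j"] by (simp add: norm_power flip: power_Suc)
  then have "1 - q * q ^ j \<noteq> 0" for j
    by (metis norm_one order.irrefl right_minus_eq)
  then show ?thesis
    by (simp add: qpoch_def)
qed

text \<open>\<open>qbinom q n k\<close> does not vanish for \<open>k > n\<close>, so it is extended by zero explicitly.\<close>

definition qbinom_ext :: "complex \<Rightarrow> nat \<Rightarrow> nat \<Rightarrow> complex" where
  "qbinom_ext q n k = (if k \<le> n then qbinom q n k else 0)"

definition H2_coeff :: "complex \<Rightarrow> nat \<Rightarrow> nat \<Rightarrow> nat \<Rightarrow> complex" where
  "H2_coeff q m n k = qbinom_ext q m k * qbinom_ext q n k * (-1) ^ k * q ^ (k choose 2) * qpoch q q k"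

lemma H2_coeff_eq_0: "m < k \<or> n < k \<Longrightarrow> H2_coeff q m n k = 0"
  by (auto simp: H2_coeff_def qbinom_ext_def)

context
  fixes q :: complex
  assumes qpoch_q_nonzero: "\<And>j. qpoch q q j \<noteq> 0"
begin

lemma one_minus_qpower_nonzero: "1 - q ^ Suc j \<noteq> 0"
  using qpoch_q_nonzero[of "Suc j"] by (simp add: qpoch_Suc)

lemma qbinom_ext_0 [simp]: "qbinom_ext q n 0 = 1"
  using qpoch_q_nonzero[of n] by (simp add: qbinom_ext_def qbinom_def)

lemma qbinom_ext_Suc_right:
  "(1 - q ^ Suc k) * qbinom_ext q n (Suc k) = (1 - q ^ (n - k)) * qbinom_ext q n k"
proof (cases "k < n")
  case True
  then have "n - k = Suc (n - Suc k)"
    by simp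
  then show ?thesis
    using True qpoch_q_nonzero[of k] qpoch_q_nonzero[of "n - Suc k"] one_minus_qpower_nonzero[of k]
      one_minus_qpower_nonzero[of "n - Suc k"]
    by (simp add: qbinom_ext_def qbinom_def qpoch_Suc field_simps)
qed (simp add: qbinom_ext_def)

lemma qbinom_ext_Suc_Suc:
  "(1 - q ^ Suc k) * qbinom_ext q (Suc n) (Suc k) = (1 - q ^ Suc n) * qbinom_ext q n k"
  using qpoch_q_nonzero[of k] qpoch_q_nonzero[of "n - k"] one_minus_qpower_nonzero[of k]
  by (simp add: qbinom_ext_def qbinom_def qpoch_Suc field_simps)

lemma qbinom_ext_pascal:
  "qbinom_ext q (Suc n) (Suc k) = qbinom_ext q n k + q ^ Suc k * qbinom_ext q n (Suc k)"
proof (rule mult_left_cancel[OF one_minus_qpower_nonzero[of k], THEN iffD1])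
  have "(1 - q ^ Suc k) * (qbinom_ext q n k + q ^ Suc k * qbinom_ext q n (Suc k))
      = (1 - q ^ Suc k) * qbinom_ext q n k + q ^ Suc k * ((1 - q ^ Suc k) * qbinom_ext q n (Suc k))"
    by (simp add: algebra_simps)
  also have "\<dots> = (1 - q ^ Suc k + q ^ Suc k * (1 - q ^ (n - k))) * qbinom_ext q n k"
    unfolding qbinom_ext_Suc_right by (simp add: algebra_simps)
  also have "\<dots> = (1 - q ^ Suc n) * qbinom_ext q n k"
    by (cases "k \<le> n") (simp_all add: qbinom_ext_def algebra_simps flip: power_add)
  finally show "(1 - q ^ Suc k) * qbinom_ext q (Suc n) (Suc k)
      = (1 - q ^ Suc k) * (qbinom_ext q n k + q ^ Suc k * qbinom_ext q n (Suc k))"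
    unfolding qbinom_ext_Suc_Suc by (rule sym)
qed

lemma H2_coeff_0 [simp]: "H2_coeff q m n 0 = 1"
  by (simp add: H2_coeff_def binomial_eq_0)

lemma H2_coeff_Suc_Suc:
  "H2_coeff q m (Suc n) (Suc k) = H2_coeff q m n k * (q ^ m - q ^ k) + H2_coeff q m n (Suc k) * q ^ Suc k"
proof -
  have ratio: "qbinom_ext q m k * (q ^ m - q ^ k) = - (q ^ k * ((1 - q ^ Suc k) * qbinom_ext q m (Suc k)))"
    unfolding qbinom_ext_Suc_right
    by (cases "k \<le> m") (simp_all add: qbinom_ext_def algebra_simps flip: power_add)
  have "H2_coeff q m n k * (q ^ m - q ^ k)
      = (qbinom_ext q m k * (q ^ m - q ^ k)) * qbinom_ext q n k * (-1) ^ k * q ^ (k choose 2) * qpoch q q k"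
    by (simp add: H2_coeff_def ac_simps)
  moreover have "Suc k choose 2 = (k choose 2) + k"
    by (simp add: numeral_2_eq_2)
  ultimately show ?thesis
    unfolding ratio H2_coeff_def qbinom_ext_pascal qpoch_Suc
    by (simp add: power_add algebra_simps)
qed

end

lemma H2_eq_sum_H2_coeff:
  assumes "n \<le> N"
  shows "H2 m n z1 z2 q = (\<Sum>k\<le>N. H2_coeff q m n k * z1 ^ (m - k) * z2 ^ (n - k))"
proof -
  have "H2 m n z1 z2 q = (\<Sum>k\<le>min m n. H2_coeff q m n k * z1 ^ (m - k) * z2 ^ (n - k))"
    unfolding H2_def by (intro sum.cong refl) (simp add: H2_coeff_def qbinom_ext_def)
  also have "\<dots> = (\<Sum>k\<le>N. H2_coeff q m n k * z1 ^ (m - k) * z2 ^ (n - k))"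
    using assms by (intro sum.mono_neutral_left) (auto simp: H2_coeff_eq_0)
  finally show ?thesis .
qed

lemma H2_coeff_times_monomial_q_difference:
  fixes q z1 z2 :: complex
  assumes "q \<noteq> 0"
  shows "H2_coeff q m n k * (q ^ m * (z1 ^ (m - k) - (1 - z1 * z2) * (z1 / q) ^ (m - k)) * z2 ^ (n - k))
       = H2_coeff q m n k * (q ^ m - q ^ k) * z1 ^ (m - k) * z2 ^ (n - k)
         + H2_coeff q m n k * q ^ k * z1 ^ (Suc m - k) * z2 ^ (Suc n - k)"
proof (cases "k \<le> m \<and> k \<le> n")
  case True
  then obtain a b where "m = k + a" "n = k + b"
    by (metis le_Suc_ex)
  then show ?thesis
    using assms by (simp add: Suc_diff_le power_add power_divide field_simps)
qed (auto simp: H2_coeff_eq_0)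

lemma H2_q_difference:
  fixes q z1 z2 :: complex
  assumes "\<And>j. qpoch q q j \<noteq> 0" and "q \<noteq> 0"
  shows "z1 * H2 m (Suc n) z1 z2 q = q ^ m * (H2 m n z1 z2 q - (1 - z1 * z2) * H2 m n (z1 / q) z2 q)"
proof -
  define A where "A k = H2_coeff q m n k * (q ^ m - q ^ k) * z1 ^ (m - k) * z2 ^ (n - k)" for k
  define B where "B k = H2_coeff q m n k * q ^ k * z1 ^ (Suc m - k) * z2 ^ (Suc n - k)" for k
  have "z1 * H2 m (Suc n) z1 z2 q = (\<Sum>k\<le>Suc n. H2_coeff q m (Suc n) k * z1 ^ (Suc m - k) * z2 ^ (Suc n - k))"
    unfolding H2_eq_sum_H2_coeff[OF le_refl] sum_distrib_left
  proof (intro sum.cong refl)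
    fix k
    show "z1 * (H2_coeff q m (Suc n) k * z1 ^ (m - k) * z2 ^ (Suc n - k))
        = H2_coeff q m (Suc n) k * z1 ^ (Suc m - k) * z2 ^ (Suc n - k)"
      by (cases "k \<le> m") (simp_all add: Suc_diff_le H2_coeff_eq_0)
  qed
  also have "\<dots> = B 0 + (\<Sum>k\<le>n. A k + B (Suc k))"
    unfolding sum.atMost_Suc_shift H2_coeff_Suc_Suc[OF assms(1)]
    by (simp add: A_def B_def H2_coeff_0[OF assms(1)] algebra_simps)
  finally have lhs: "z1 * H2 m (Suc n) z1 z2 q = B 0 + (\<Sum>k\<le>n. A k + B (Suc k))" .
  have "q ^ m * (H2 m n z1 z2 q - (1 - z1 * z2) * H2 m n (z1 / q) z2 q) = (\<Sum>k\<le>Suc n. A k + B k)"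
    unfolding H2_eq_sum_H2_coeff[OF le_SucI[OF le_refl], of m n] A_def B_def
      H2_coeff_times_monomial_q_difference[OF assms(2), symmetric]
    by (simp add: sum_distrib_left sum_subtractf[symmetric] algebra_simps)
  also have "\<dots> = (\<Sum>k\<le>n. A k) + (B 0 + (\<Sum>k\<le>n. B (Suc k)))"
    unfolding sum.distrib sum.atMost_Suc_shift[of B]
    by (simp add: A_def H2_coeff_eq_0)
  finally show ?thesis
    using lhs by (simp add: sum.distrib)
qed

lemma H2_swap: "H2 m n z1 z2 q = H2 n m z2 z1 q"
  unfolding H2_def by (intro sum.cong) (auto simp: min.commute ac_simps)

lemma qpoch_inf_unfold:
  fixes q x :: complex
  assumes "norm q < 1"
  shows "qpoch_inf x q = (1 - x) * qpoch_inf (q * x) q"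
proof -
  define f where "f = (\<lambda>j. 1 - x * q ^ j)"
  have "summable (\<lambda>j. norm (q * x) * norm q ^ j)"
    using assms by (intro summable_mult summable_geometric) simp
  then have "convergent_prod (\<lambda>j. f (Suc j))"
    by (intro abs_convergent_prod_imp_convergent_prod summable_imp_abs_convergent_prod)
      (simp add: f_def norm_mult norm_power ac_simps)
  then have "f has_prod ((\<Prod>j. f (Suc j)) * f 0)"
    by (intro has_prod_Suc_imp convergent_prod_has_prod)
  then have "prodinf f = (\<Prod>j. f (Suc j)) * f 0"
    by (rule has_prod_unique[symmetric])
  then show ?thesis
    by (simp add: qpoch_inf_def f_def ac_simps)
qed

lemma D1_divide_cong:
  assumes "F z1 z2 = G z1 z2 / c" "F (p * z1) z2 = G (p * z1) z2 / c"
  shows "D1 p F z1 z2 = D1 p G z1 z2 / c"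
  by (simp add: D1_def assms diff_divide_distrib mult_ac)

lemma D2_divide_cong:
  assumes "F z1 z2 = G z1 z2 / c" "F z1 (p * z2) = G z1 (p * z2) / c"
  shows "D2 p F z1 z2 = D2 p G z1 z2 / c"
  by (simp add: D2_def assms diff_divide_distrib mult_ac)

lemma D2_eq_D1_swap: "D2 p F z1 z2 = D1 p (\<lambda>w1 w2. F w2 w1) z2 z1"
  by (simp add: D1_def D2_def)

locale q_weight =
  fixes Q :: complex
  assumes norm_less_1: "norm Q < 1" and nonzero: "Q \<noteq> 0"
begin

definition W :: "complex \<Rightarrow> complex \<Rightarrow> complex" where
  "W w1 w2 = qpoch_inf (Q * w1 * w2) Q"

lemma W_swap: "W w1 w2 = W w2 w1"
  by (simp add: W_def ac_simps)

lemma W_divide_Q: "W (w1 / Q) w2 = (1 - w1 * w2) * W w1 w2"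
  using qpoch_inf_unfold[OF norm_less_1, of "w1 * w2"] nonzero by (simp add: W_def ac_simps)

lemma one_minus_inverse_nonzero: "1 - 1 / Q \<noteq> 0"
  using norm_less_1 by auto

lemma D1_W_H2:
  assumes "z1 \<noteq> 0"
  shows "D1 (1 / Q) (\<lambda>w1 w2. W w1 w2 * H2 m n w1 w2 Q) z1 z2
       = W z1 z2 * H2 m (Suc n) z1 z2 Q / (Q ^ m * (1 - 1 / Q))"
proof -
  have "D1 (1 / Q) (\<lambda>w1 w2. W w1 w2 * H2 m n w1 w2 Q) z1 z2
      = W z1 z2 * (H2 m n z1 z2 Q - (1 - z1 * z2) * H2 m n (z1 / Q) z2 Q) / ((1 - 1 / Q) * z1)"
    by (simp add: D1_def W_divide_Q algebra_simps)
  also have "\<dots> = W z1 z2 * (z1 * H2 m (Suc n) z1 z2 Q / Q ^ m) / ((1 - 1 / Q) * z1)"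
    using nonzero by (simp add: H2_q_difference[OF qpoch_nonzero[OF norm_less_1] nonzero])
  finally show ?thesis
    using assms by simp
qed

lemma D2_W_H2:
  assumes "z2 \<noteq> 0"
  shows "D2 (1 / Q) (\<lambda>w1 w2. W w1 w2 * H2 m n w1 w2 Q) z1 z2
       = W z1 z2 * H2 (Suc m) n z1 z2 Q / (Q ^ n * (1 - 1 / Q))"
proof -
  have "(\<lambda>w1 w2. W w2 w1 * H2 m n w2 w1 Q) = (\<lambda>w1 w2. W w1 w2 * H2 n m w1 w2 Q)"
    by (intro ext) (metis W_swap H2_swap)
  then have "D2 (1 / Q) (\<lambda>w1 w2. W w1 w2 * H2 m n w1 w2 Q) z1 z2
      = D1 (1 / Q) (\<lambda>w1 w2. W w1 w2 * H2 n m w1 w2 Q) z2 z1"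
    by (simp only: D2_eq_D1_swap)
  also have "\<dots> = W z2 z1 * H2 n (Suc m) z2 z1 Q / (Q ^ n * (1 - 1 / Q))"
    by (rule D1_W_H2[OF assms])
  finally show ?thesis
    by (simp only: W_swap[of z2 z1] H2_swap[of n "Suc m"])
qed

lemma D1_funpow_W:
  assumes "z1 \<noteq> 0"
  shows "(D1 (1 / Q) ^^ n) W z1 z2 = W z1 z2 * H2 0 n z1 z2 Q / (1 - 1 / Q) ^ n"
  using assms
proof (induction n arbitrary: z1)
  case 0
  then show ?case
    by (simp add: H2_def qbinom_def binomial_eq_0)
next
  case (Suc n)
  then have "(D1 (1 / Q) ^^ Suc n) W z1 z2
      = D1 (1 / Q) (\<lambda>w1 w2. W w1 w2 * H2 0 n w1 w2 Q) z1 z2 / (1 - 1 / Q) ^ n"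
    using nonzero by (simp add: D1_divide_cong)
  then show ?case
    by (simp add: D1_W_H2[OF Suc.prems])
qed

lemma rodrigues_formula:
  assumes "z1 \<noteq> 0" "z2 \<noteq> 0"
  shows "(D2 (1 / Q) ^^ m) ((D1 (1 / Q) ^^ n) W) z1 z2
       = W z1 z2 * H2 m n z1 z2 Q / ((1 - 1 / Q) ^ (m + n) * Q ^ (m * n))"
  using assms(2)
proof (induction m arbitrary: z2)
  case 0
  then show ?case
    by (simp add: D1_funpow_W[OF assms(1)])
next
  case (Suc m)
  then have "(D2 (1 / Q) ^^ Suc m) ((D1 (1 / Q) ^^ n) W) z1 z2
      = D2 (1 / Q) (\<lambda>w1 w2. W w1 w2 * H2 m n w1 w2 Q) z1 z2 / ((1 - 1 / Q) ^ (m + n) * Q ^ (m * n))"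
    using nonzero by (simp add: D2_divide_cong)
  also have "\<dots> = W z1 z2 * H2 (Suc m) n z1 z2 Q / (Q ^ n * (1 - 1 / Q) * ((1 - 1 / Q) ^ (m + n) * Q ^ (m * n)))"
    by (simp add: D2_W_H2[OF Suc.prems])
  finally show ?case
    by (simp add: power_add ac_simps)
qed

end

theorem theorem3p2:
  fixes q :: real and m n :: nat and z1 z2 :: complex
  assumes "0 < q" "q < 1"
    and "z1 \<noteq> 0" "z2 \<noteq> 0"
    and "qpoch_inf (of_real q * z1 * z2) (of_real q) \<noteq> 0"
  shows "H2 m n z1 z2 (of_real q) =
           (1 - 1 / of_real q) ^ (m + n) * of_real q ^ (m * n)
           / qpoch_inf (of_real q * z1 * z2) (of_real q)
           * ((D2 (1 / of_real q) ^^ m) ((D1 (1 / of_real q) ^^ n)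
                (\<lambda>w1 w2. qpoch_inf (of_real q * w1 * w2) (of_real q)))) z1 z2
         \<and> H2 (Suc m) n z1 z2 (of_real q) =
           of_real q ^ n * (1 - 1 / of_real q)
           / qpoch_inf (of_real q * z1 * z2) (of_real q)
           * D2 (1 / of_real q)
               (\<lambda>w1 w2. qpoch_inf (of_real q * w1 * w2) (of_real q) * H2 m n w1 w2 (of_real q)) z1 z2
         \<and> H2 m (Suc n) z1 z2 (of_real q) =
           of_real q ^ m * (1 - 1 / of_real q)
           / qpoch_inf (of_real q * z1 * z2) (of_real q)
           * D1 (1 / of_real q)
               (\<lambda>w1 w2. qpoch_inf (of_real q * w1 * w2) (of_real q) * H2 m n w1 w2 (of_real q)) z1 z2"
proof -
  interpret q_weight "of_real q"
    by unfold_locales (use assms in simp_all)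
  have W_eq: "(\<lambda>w1 w2. qpoch_inf (of_real q * w1 * w2) (of_real q)) = W"
    by (simp add: W_def fun_eq_iff)
  have "W z1 z2 \<noteq> 0"
    using assms(5) by (simp add: W_def)
  with nonzero one_minus_inverse_nonzero
  show ?thesis
    unfolding W_eq W_def[symmetric]
    by (simp add: rodrigues_formula[OF assms(3,4)] D2_W_H2[OF assms(4)] D1_W_H2[OF assms(3)])
qed

end
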